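(* In the multi-agent combinatorial-actions contract model (described in the context) with a subadditive reward function $f$, the optimal single-agent contract is an $O(n)$-approximation of the optimal unconstrained contract: there exist a contract $\boldsymbol{\alpha}$ with $\alpha_i=0$ for all but at most one agent $i$, and a pure Nash equilibrium $S$ of $\boldsymbol{\alpha}$, such that $$\Big(1-\sum_i\alpha_i\Big)f(S)\ \ge\ \Omega\!\left(\frac1n\right)\max_{\boldsymbol{\alpha}^\star,\,S^\star\in\mathsf{NE}(\boldsymbol{\alpha}^\star)}\Big(1-\sum_i\alpha^\star_i\Big)f(S^\star).$$
   Context: Model: principal and agents $A=[n]$; each agent $i$ has a finite action set $T_i$ (pairwise disjoint), $T=\bigsqcup_iT_i$, costs $c_j\ge0$, $c(S_i)=\sum_{j\in S_i}c_j$. Reward $f:2^T\to[0,1]$ monotone, $f(\emptyset)=0$; subadditive means $f(S)+f(S')\ge f(S\cup S')$. Contract $\boldsymbol{\alpha}\in[0,1]^A$; agent $i$'s utility $\alpha_if(S)-c(S\cap T_i)$; $S\in\mathsf{NE}(\boldsymbol{\alpha})$ (pure Nash equilibrium) if no agent can gain by changing her own subset of actions. Principal's utility $(1-\sum_i\alpha_i)f(S)$. The $\Omega(\cdot)$ hides a universal constant. *)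

theory Defs
  imports "HOL-Analysis.Analysis"
begin

text \<open>Agent i owns the finite
action set T i; these are pairwise disjoint.
A (joint) action profile is a subset S of the union of all T i.\<close>

definition all_actions :: "'a set \<Rightarrow> ('a \<Rightarrow> 'b set) \<Rightarrow> 'b set" where
  "all_actions Ag T = (\<Union>i\<in>Ag. T i)"

definition cost :: "('b \<Rightarrow> real) \<Rightarrow> 'b set \<Rightarrow> real" where
  "cost c X = (\<Sum>j\<in>X. c j)"

definition agent_util ::
  "('a \<Rightarrow> 'b set) \<Rightarrow> ('b \<Rightarrow> real) \<Rightarrow> ('b set \<Rightarrow> real) \<Rightarrow> ('a \<Rightarrow> real) \<Rightarrow> 'a \<Rightarrow> 'b set \<Rightarrow> real" where
  "agent_util T c f \<alpha> i S = \<alpha> i * f S - cost c (S \<inter> T i)"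

definition is_NE ::
  "'a set \<Rightarrow> ('a \<Rightarrow> 'b set) \<Rightarrow> ('b \<Rightarrow> real) \<Rightarrow> ('b set \<Rightarrow> real) \<Rightarrow> ('a \<Rightarrow> real) \<Rightarrow> 'b set \<Rightarrow> bool" where
  "is_NE Ag T c f \<alpha> S \<longleftrightarrow> S \<subseteq> all_actions Ag T \<and>
     (\<forall>i\<in>Ag. \<forall>S'\<subseteq>T i.
        agent_util T c f \<alpha> i ((S - T i) \<union> S') \<le> agent_util T c f \<alpha> i S)"

definition is_contract :: "'a set \<Rightarrow> ('a \<Rightarrow> real) \<Rightarrow> bool" where
  "is_contract Ag \<alpha> \<longleftrightarrow> (\<forall>i\<in>Ag. 0 \<le> \<alpha> i \<and> \<alpha> i \<le> 1) \<and> (\<forall>i. i \<notin> Ag \<longrightarrow> \<alpha> i = 0)"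

definition principal_util :: "'a set \<Rightarrow> ('b set \<Rightarrow> real) \<Rightarrow> ('a \<Rightarrow> real) \<Rightarrow> 'b set \<Rightarrow> real" where
  "principal_util Ag f \<alpha> S = (1 - (\<Sum>i\<in>Ag. \<alpha> i)) * f S"

definition valid_reward :: "'b set \<Rightarrow> ('b set \<Rightarrow> real) \<Rightarrow> bool" where
  "valid_reward U f \<longleftrightarrow> f {} = 0 \<and>
     (\<forall>S\<subseteq>U. 0 \<le> f S \<and> f S \<le> 1) \<and>
     (\<forall>S S'. S \<subseteq> S' \<and> S' \<subseteq> U \<longrightarrow> f S \<le> f S')"

definition subadditive_on :: "'b set \<Rightarrow> ('b set \<Rightarrow> real) \<Rightarrow> bool" where
  "subadditive_on U f \<longleftrightarrow> (\<forall>S S'. S \<subseteq> U \<and> S' \<subseteq> U \<longrightarrow> f (S \<union> S') \<le> f S + f S')"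

end

theory Submission
  imports Defs
begin

text \<open>Fix an equilibrium S of a contract \<alpha> with principal utility p. In an equilibrium the
cost of agent j is at most \<alpha> j * f (S \<inter> T j): otherwise dropping all her actions would pay
off, since by subadditivity this loses at most f (S \<inter> T j) of reward. Hence if \<alpha> j \<le> 1/2,
offering agent j alone the share 3/4 induces a best response worth at least f (S \<inter> T j) / 3.
If all shares are at most 1/2, subadditivity yields an agent j with f (S \<inter> T j) \<ge> f S / n \<ge> p / n.
Otherwise one agent i has \<alpha> i > 1/2 and all other shares are below 1/2. If the remaining
actions S - T i are worth little, offering i alone the share (1 + \<alpha> i) / 2 retains at least
(1 - \<alpha> i) * f S / 4 \<ge> p / 4; if they are worth much, the first argument applies to the other
agents. Finally, an optimal single-agent contract exists: for each agent and set of actions,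
the shares making that set a best response form a compact set.\<close>

lemma subadditive_on_UN:
  assumes "subadditive_on U f" and "f {} = 0" and "finite B" and "\<forall>j\<in>B. X j \<subseteq> U"
  shows "f (\<Union>j\<in>B. X j) \<le> (\<Sum>j\<in>B. f (X j))"
  using assms(3,4)
proof (induction B rule: finite_induct)
  case empty
  then show ?case using assms(2) by simp
next
  case (insert x B)
  have "f (\<Union>j\<in>insert x B. X j) \<le> f (X x) + f (\<Union>j\<in>B. X j)"
    using assms(1) insert.prems unfolding subadditive_on_def by (simp add: UN_subset_iff)
  then show ?case using insert by simp
qed

lemma ex_sum_le_card_mult:
  fixes v :: "'a \<Rightarrow> real"
  assumes "finite B" and "B \<noteq> {}"
  shows "\<exists>j\<in>B. sum v B \<le> real (card B) * v j"
proof -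
  have "Max (v ` B) \<in> v ` B"
    using assms by (intro Max_in) auto
  then obtain j where j: "j \<in> B" "v j = Max (v ` B)"
    by auto
  have "sum v B \<le> real (card B) * v j"
    using j assms by (intro sum_bounded_above) auto
  then show ?thesis using j by blast
qed

locale subadditive_contract_instance =
  fixes Ag :: "nat set" and T :: "nat \<Rightarrow> nat set" and c :: "nat \<Rightarrow> real"
    and f :: "nat set \<Rightarrow> real"
  assumes finite_agents: "finite Ag" and agents_nonempty: "Ag \<noteq> {}"
    and finite_actions: "\<forall>i\<in>Ag. finite (T i)"
    and disjoint_actions: "\<forall>i\<in>Ag. \<forall>k\<in>Ag. i \<noteq> k \<longrightarrow> T i \<inter> T k = {}"
    and cost_nonneg: "\<forall>j\<in>all_actions Ag T. 0 \<le> c j"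
    and reward: "valid_reward (all_actions Ag T) f"
    and subadditive: "subadditive_on (all_actions Ag T) f"
begin

abbreviation U :: "nat set" where
  "U \<equiv> all_actions Ag T"

lemma f_empty: "f {} = 0"
  using reward unfolding valid_reward_def by auto

lemma f_nonneg: "X \<subseteq> U \<Longrightarrow> 0 \<le> f X"
  using reward unfolding valid_reward_def by auto

lemma f_mono: "X \<subseteq> Y \<Longrightarrow> Y \<subseteq> U \<Longrightarrow> f X \<le> f Y"
  using reward unfolding valid_reward_def by auto

lemma f_Un_le: "X \<subseteq> U \<Longrightarrow> Y \<subseteq> U \<Longrightarrow> f (X \<union> Y) \<le> f X + f Y"
  using subadditive unfolding subadditive_on_def by auto

lemma actions_subset: "i \<in> Ag \<Longrightarrow> T i \<subseteq> U"
  unfolding all_actions_def by auto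

lemma cost_nonneg_on: "X \<subseteq> U \<Longrightarrow> 0 \<le> cost c X"
  unfolding cost_def using cost_nonneg by (meson subsetD sum_nonneg)

lemma card_agents_pos: "0 < real (card Ag)"
  using finite_agents agents_nonempty by (simp add: card_gt_0_iff)

definition best_response :: "nat \<Rightarrow> real \<Rightarrow> nat set \<Rightarrow> bool" where
  "best_response i \<beta> S \<longleftrightarrow>
     S \<subseteq> T i \<and> (\<forall>S'\<subseteq>T i. \<beta> * f S' - cost c S' \<le> \<beta> * f S - cost c S)"

definition single_agent_contract :: "nat \<Rightarrow> real \<Rightarrow> nat \<Rightarrow> real" where
  "single_agent_contract i \<beta> = (\<lambda>k. if k = i then \<beta> else 0)"

definition single_agent_outcome :: "nat \<Rightarrow> real \<Rightarrow> nat set \<Rightarrow> bool" where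
  "single_agent_outcome i \<beta> S \<longleftrightarrow> i \<in> Ag \<and> 0 \<le> \<beta> \<and> \<beta> \<le> 1 \<and> best_response i \<beta> S"

lemma ex_best_response:
  assumes "i \<in> Ag"
  shows "\<exists>S. best_response i \<beta> S"
proof -
  define u where "u S = \<beta> * f S - cost c S" for S
  have "finite (u ` Pow (T i))"
    using finite_actions assms by simp
  then have "Max (u ` Pow (T i)) \<in> u ` Pow (T i)"
    by (intro Max_in) auto
  then obtain S where S: "S \<in> Pow (T i)" "u S = Max (u ` Pow (T i))"
    by auto
  have "u S' \<le> u S" if "S' \<subseteq> T i" for S'
    using S that \<open>finite (u ` Pow (T i))\<close> by simp
  then show ?thesis
    using S unfolding best_response_def u_def by blast
qed

lemma ex_single_agent_outcome:
  assumes "0 \<le> \<beta>" and "\<beta> \<le> 1"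
  shows "\<exists>i S. single_agent_outcome i \<beta> S"
proof -
  obtain i where i: "i \<in> Ag"
    using agents_nonempty by blast
  moreover obtain S where "best_response i \<beta> S"
    using ex_best_response[OF i] by blast
  ultimately show ?thesis
    using assms unfolding single_agent_outcome_def by blast
qed

lemma single_agent_outcome_util_nonneg:
  assumes "single_agent_outcome i \<beta> S"
  shows "0 \<le> (1 - \<beta>) * f S"
proof -
  have "\<beta> \<le> 1" and "S \<subseteq> U"
    using assms actions_subset unfolding single_agent_outcome_def best_response_def by auto
  then show ?thesis
    using f_nonneg by simp
qed

lemma single_agent_outcome_NE:
  assumes "single_agent_outcome i \<beta> S"
  shows "is_contract Ag (single_agent_contract i \<beta>)"
    and "card {k\<in>Ag. single_agent_contract i \<beta> k \<noteq> 0} \<le> 1"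
    and "is_NE Ag T c f (single_agent_contract i \<beta>) S"
    and "principal_util Ag f (single_agent_contract i \<beta>) S = (1 - \<beta>) * f S"
proof -
  have i: "i \<in> Ag" and \<beta>: "0 \<le> \<beta>" "\<beta> \<le> 1" and br: "best_response i \<beta> S"
    and ST: "S \<subseteq> T i"
    using assms unfolding single_agent_outcome_def best_response_def by auto
  show "is_contract Ag (single_agent_contract i \<beta>)"
    using i \<beta> unfolding is_contract_def single_agent_contract_def by auto
  have "card {k\<in>Ag. single_agent_contract i \<beta> k \<noteq> 0} \<le> card {i}"
    by (intro card_mono) (auto simp: single_agent_contract_def)
  then show "card {k\<in>Ag. single_agent_contract i \<beta> k \<noteq> 0} \<le> 1"
    by simp
  have "(\<Sum>k\<in>Ag. single_agent_contract i \<beta> k) = \<beta>"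
    unfolding single_agent_contract_def using finite_agents i by simp
  then show "principal_util Ag f (single_agent_contract i \<beta>) S = (1 - \<beta>) * f S"
    unfolding principal_util_def by simp
  show "is_NE Ag T c f (single_agent_contract i \<beta>) S"
    unfolding is_NE_def
  proof (intro conjI ballI allI impI)
    show "S \<subseteq> U" using ST actions_subset[OF i] by auto
  next
    fix k S' assume k: "k \<in> Ag" and S': "S' \<subseteq> T k"
    show "agent_util T c f (single_agent_contract i \<beta>) k (S - T k \<union> S')
          \<le> agent_util T c f (single_agent_contract i \<beta>) k S"
    proof (cases "k = i")
      case True
      then have "S - T k \<union> S' = S'" "S' \<inter> T k = S'" "S \<inter> T k = S"
        using ST S' by auto
      then show ?thesis
        using br S' True unfolding agent_util_def best_response_def single_agent_contract_def
        by auto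
    next
      case False
      then have "S \<inter> T k = {}"
        using ST disjoint_actions k i by blast
      moreover have "(S - T k \<union> S') \<inter> T k = S'"
        using S' by auto
      moreover have "0 \<le> cost c S'"
        using S' actions_subset[OF k] by (intro cost_nonneg_on) auto
      ultimately show ?thesis
        unfolding agent_util_def single_agent_contract_def using False by (simp add: cost_def)
    qed
  qed
qed

lemma compact_best_response_shares: "compact {\<beta> \<in> {0..1}. best_response i \<beta> S}"
proof -
  have "{\<beta> \<in> {0..1}. best_response i \<beta> S} = {0..1} \<inter> {\<beta>. S \<subseteq> T i} \<inter>
          (\<Inter>S'\<in>Pow (T i). {\<beta>. \<beta> * f S' - cost c S' \<le> \<beta> * f S - cost c S})"
    unfolding best_response_def by auto
  moreover have "closed {\<beta>::real. \<beta> * f S' - cost c S' \<le> \<beta> * f S - cost c S}" for S'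
    by (intro closed_Collect_le continuous_intros)
  moreover have "closed {\<beta>::real. S \<subseteq> T i}"
    by (cases "S \<subseteq> T i") auto
  ultimately show ?thesis
    by (auto intro!: compact_Int_closed closed_INT)
qed

lemma ex_optimal_single_agent_outcome:
  "\<exists>i\<^sub>0 \<beta>\<^sub>0 S\<^sub>0. single_agent_outcome i\<^sub>0 \<beta>\<^sub>0 S\<^sub>0 \<and>
     (\<forall>i \<beta> S. single_agent_outcome i \<beta> S \<longrightarrow> (1 - \<beta>) * f S \<le> (1 - \<beta>\<^sub>0) * f S\<^sub>0)"
proof -
  define W where "W = (\<Union>i\<in>Ag. \<Union>S\<in>Pow (T i).
     (\<lambda>\<beta>. (1 - \<beta>) * f S) ` {\<beta> \<in> {0..1}. best_response i \<beta> S})"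
  have W_iff: "u \<in> W \<longleftrightarrow> (\<exists>i \<beta> S. single_agent_outcome i \<beta> S \<and> u = (1 - \<beta>) * f S)" for u
    unfolding W_def single_agent_outcome_def best_response_def by auto
  have "compact W"
    unfolding W_def using finite_agents finite_actions
    by (intro compact_UN finite_Pow_iff[THEN iffD2] compact_continuous_image
        continuous_intros compact_best_response_shares) auto
  moreover have "W \<noteq> {}"
    using W_iff ex_single_agent_outcome[of 0] by auto
  ultimately obtain u where "u \<in> W" "\<forall>t\<in>W. t \<le> u"
    using compact_attains_sup by blast
  then show ?thesis
    using W_iff by metis
qed

lemma NE_subset: "is_NE Ag T c f a S\<^sub>0 \<Longrightarrow> S\<^sub>0 \<subseteq> U"
  unfolding is_NE_def by auto

lemma NE_deviation:
  assumes "is_NE Ag T c f a S\<^sub>0" and "i \<in> Ag" and "S \<subseteq> T i"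
  shows "a i * f (S\<^sub>0 - T i \<union> S) - cost c S \<le> a i * f S\<^sub>0 - cost c (S\<^sub>0 \<inter> T i)"
proof -
  have "agent_util T c f a i (S\<^sub>0 - T i \<union> S) \<le> agent_util T c f a i S\<^sub>0"
    using assms unfolding is_NE_def by blast
  moreover have "(S\<^sub>0 - T i \<union> S) \<inter> T i = S"
    using assms(3) by auto
  ultimately show ?thesis
    unfolding agent_util_def by simp
qed

lemma NE_split_le:
  assumes "is_NE Ag T c f a S\<^sub>0"
  shows "f S\<^sub>0 \<le> f (S\<^sub>0 \<inter> T i) + f (S\<^sub>0 - T i)"
proof -
  have "f (S\<^sub>0 \<inter> T i \<union> (S\<^sub>0 - T i)) \<le> f (S\<^sub>0 \<inter> T i) + f (S\<^sub>0 - T i)"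
    using NE_subset[OF assms] by (intro f_Un_le) auto
  then show ?thesis
    by (simp add: Int_Diff_Un)
qed

lemma NE_cost_le:
  assumes ne: "is_NE Ag T c f a S\<^sub>0" and ct: "is_contract Ag a" and i: "i \<in> Ag"
  shows "cost c (S\<^sub>0 \<inter> T i) \<le> a i * f (S\<^sub>0 \<inter> T i)"
proof -
  have "a i * f (S\<^sub>0 - T i) \<le> a i * f S\<^sub>0 - cost c (S\<^sub>0 \<inter> T i)"
    using NE_deviation[OF ne i, of "{}"] by (simp add: cost_def)
  moreover have "a i * f S\<^sub>0 \<le> a i * (f (S\<^sub>0 \<inter> T i) + f (S\<^sub>0 - T i))"
    using NE_split_le[OF ne] ct i unfolding is_contract_def by (intro mult_left_mono) auto
  ultimately show ?thesis
    by (simp add: algebra_simps)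
qed

lemma best_response_ge_NE_part:
  assumes ne: "is_NE Ag T c f a S\<^sub>0" and ct: "is_contract Ag a" and i: "i \<in> Ag"
    and br: "best_response i \<beta> S"
  shows "(\<beta> - a i) * f (S\<^sub>0 \<inter> T i) \<le> \<beta> * f S"
proof -
  have "\<beta> * f (S\<^sub>0 \<inter> T i) - cost c (S\<^sub>0 \<inter> T i) \<le> \<beta> * f S - cost c S"
    using br unfolding best_response_def by auto
  moreover have "0 \<le> cost c S"
    using br actions_subset[OF i] unfolding best_response_def by (intro cost_nonneg_on) auto
  ultimately show ?thesis
    using NE_cost_le[OF ne ct i] by (simp add: algebra_simps)
qed

text \<open>Adding agent i's equilibrium condition against deviating to S and the best-response
condition of S against agent i's equilibrium actions, the costs cancel.\<close>

lemma best_response_ge_NE_rest: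
  assumes ne: "is_NE Ag T c f a S\<^sub>0" and ct: "is_contract Ag a" and i: "i \<in> Ag"
    and br: "best_response i \<beta> S" and \<beta>: "0 \<le> \<beta>"
  shows "(\<beta> - a i) * f S\<^sub>0 - \<beta> * f (S\<^sub>0 - T i) \<le> (\<beta> - a i) * f S"
proof -
  have ST: "S \<subseteq> T i"
    using br unfolding best_response_def by auto
  have a_i: "0 \<le> a i"
    using ct i unfolding is_contract_def by auto
  have "a i * f S \<le> a i * f (S\<^sub>0 - T i \<union> S)"
    using NE_subset[OF ne] ST actions_subset[OF i] a_i by (intro mult_left_mono f_mono) auto
  then have dev: "a i * f S - cost c S \<le> a i * f S\<^sub>0 - cost c (S\<^sub>0 \<inter> T i)"
    using NE_deviation[OF ne i ST] by linarith
  have resp: "\<beta> * f (S\<^sub>0 \<inter> T i) - cost c (S\<^sub>0 \<inter> T i) \<le> \<beta> * f S - cost c S"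
    using br ST unfolding best_response_def by auto
  have "\<beta> * f S\<^sub>0 \<le> \<beta> * (f (S\<^sub>0 \<inter> T i) + f (S\<^sub>0 - T i))"
    using NE_split_le[OF ne] \<beta> by (intro mult_left_mono) auto
  then show ?thesis
    using dev resp by (simp add: algebra_simps)
qed

lemma approx_by_small_share_agents:
  assumes ne: "is_NE Ag T c f a S\<^sub>0" and ct: "is_contract Ag a"
    and J: "J \<subseteq> Ag" and small: "\<forall>j\<in>J. a j \<le> 1/2"
  shows "\<exists>i \<beta> S. single_agent_outcome i \<beta> S \<and>
           f (\<Union>j\<in>J. S\<^sub>0 \<inter> T j) / (12 * real (card Ag)) \<le> (1 - \<beta>) * f S"
proof (cases "J = {}")
  case True
  obtain i S where outcome: "single_agent_outcome i 0 S"
    using ex_single_agent_outcome[of 0] by auto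
  moreover have "f (\<Union>j\<in>J. S\<^sub>0 \<inter> T j) / (12 * real (card Ag)) \<le> (1 - 0) * f S"
    using True single_agent_outcome_util_nonneg[OF outcome] by (simp add: f_empty)
  ultimately show ?thesis
    by blast
next
  case False
  define v where "v j = f (S\<^sub>0 \<inter> T j)" for j
  have finite_J: "finite J"
    using J finite_agents by (rule finite_subset)
  have v_nonneg: "0 \<le> v j" for j
    unfolding v_def using NE_subset[OF ne] by (intro f_nonneg) auto
  obtain j where j: "j \<in> J" "sum v J \<le> real (card J) * v j"
    using ex_sum_le_card_mult[OF finite_J False] by blast
  obtain S where S: "best_response j (3/4) S"
    using ex_best_response j J by blast
  have "f (\<Union>j\<in>J. S\<^sub>0 \<inter> T j) \<le> sum v J"
    unfolding v_def using NE_subset[OF ne]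
    by (intro subadditive_on_UN[OF subadditive f_empty finite_J]) auto
  also have "\<dots> \<le> real (card Ag) * v j"
    using j card_mono[OF finite_agents J] v_nonneg[of j]
    by (meson mult_right_mono of_nat_le_iff order_trans)
  finally have "f (\<Union>j\<in>J. S\<^sub>0 \<inter> T j) / (12 * real (card Ag)) \<le> v j / 12"
    using card_agents_pos by (simp add: field_simps)
  also have "\<dots> \<le> (1 - 3/4) * f S"
  proof -
    have "1/4 * v j \<le> (3/4 - a j) * v j"
      using small j v_nonneg[of j] by (intro mult_right_mono) auto
    also have "\<dots> \<le> 3/4 * f S"
      unfolding v_def using best_response_ge_NE_part[OF ne ct _ S] j J by auto
    finally show ?thesis
      by simp
  qed
  finally have "f (\<Union>j\<in>J. S\<^sub>0 \<inter> T j) / (12 * real (card Ag)) \<le> (1 - 3/4) * f S" .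
  moreover have "single_agent_outcome j (3/4) S"
    using S j J unfolding single_agent_outcome_def by auto
  ultimately show ?thesis
    by blast
qed

lemma approx_by_raised_share:
  assumes ne: "is_NE Ag T c f a S\<^sub>0" and ct: "is_contract Ag a" and i: "i \<in> Ag"
  shows "\<exists>\<beta> S. single_agent_outcome i \<beta> S \<and>
           (1 - a i) * f S\<^sub>0 / 2 - f (S\<^sub>0 - T i) \<le> (1 - \<beta>) * f S"
proof -
  define \<beta> where "\<beta> = (1 + a i) / 2"
  have a_i: "0 \<le> a i" "a i \<le> 1"
    using ct i unfolding is_contract_def by auto
  then have \<beta>: "0 \<le> \<beta>" "\<beta> \<le> 1"
    unfolding \<beta>_def by simp_all
  have shares: "\<beta> - a i = 1 - \<beta>" "(1 - a i) * f S\<^sub>0 / 2 = (1 - \<beta>) * f S\<^sub>0"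
    unfolding \<beta>_def by (simp_all add: field_simps)
  obtain S where S: "best_response i \<beta> S"
    using ex_best_response[OF i] by blast
  have "(1 - \<beta>) * f S\<^sub>0 - \<beta> * f (S\<^sub>0 - T i) \<le> (1 - \<beta>) * f S"
    using best_response_ge_NE_rest[OF ne ct i S \<beta>(1)] shares(1) by simp
  moreover have "0 \<le> f (S\<^sub>0 - T i)"
    using NE_subset[OF ne] by (intro f_nonneg) auto
  then have "\<beta> * f (S\<^sub>0 - T i) \<le> f (S\<^sub>0 - T i)"
    using \<beta> by (intro mult_left_le_one_le)
  ultimately have "(1 - a i) * f S\<^sub>0 / 2 - f (S\<^sub>0 - T i) \<le> (1 - \<beta>) * f S"
    unfolding shares(2) by linarith
  moreover have "single_agent_outcome i \<beta> S"
    using S i \<beta> unfolding single_agent_outcome_def by auto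
  ultimately show ?thesis
    by blast
qed

lemma approx_with_dominant_agent:
  assumes ne: "is_NE Ag T c f a S\<^sub>0" and ct: "is_contract Ag a" and i: "i \<in> Ag"
    and dominant: "1/2 < a i" and budget: "sum a Ag < 1"
  shows "\<exists>i \<beta> S. single_agent_outcome i \<beta> S \<and>
           principal_util Ag f a S\<^sub>0 / (48 * real (card Ag)) \<le> (1 - \<beta>) * f S"
proof -
  define p where "p = principal_util Ag f a S\<^sub>0"
  define w where "w = f (S\<^sub>0 - T i)"
  have a_nonneg: "\<forall>j\<in>Ag. 0 \<le> a j"
    using ct unfolding is_contract_def by auto
  have sum_split: "sum a Ag = a i + sum a (Ag - {i})"
    using finite_agents i by (simp add: sum.remove)
  have others_small: "\<forall>j\<in>Ag - {i}. a j \<le> 1/2"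
  proof
    fix j assume "j \<in> Ag - {i}"
    then have "a j \<le> sum a (Ag - {i})"
      using a_nonneg finite_agents by (intro member_le_sum) auto
    then show "a j \<le> 1/2"
      using sum_split budget dominant by linarith
  qed
  have F: "0 \<le> f S\<^sub>0"
    using NE_subset[OF ne] by (rule f_nonneg)
  have "0 \<le> sum a (Ag - {i})"
    using a_nonneg by (intro sum_nonneg) auto
  then have "1 - sum a Ag \<le> 1 - a i"
    using sum_split by linarith
  then have "(1 - sum a Ag) * f S\<^sub>0 \<le> (1 - a i) * f S\<^sub>0"
    using F by (rule mult_right_mono)
  moreover have "0 \<le> (1 - sum a Ag) * f S\<^sub>0"
    using budget F by simp
  ultimately have p_bounds: "0 \<le> p" "p \<le> (1 - a i) * f S\<^sub>0"
    unfolding p_def principal_util_def by simp_all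
  show ?thesis
  proof (cases "4 * w \<le> (1 - a i) * f S\<^sub>0")
    case True
    obtain \<beta> S where outcome: "single_agent_outcome i \<beta> S"
      and "(1 - a i) * f S\<^sub>0 / 2 - w \<le> (1 - \<beta>) * f S"
      using approx_by_raised_share[OF ne ct i] unfolding w_def by blast
    moreover have "p / (48 * real (card Ag)) \<le> p / 4"
      using p_bounds card_agents_pos by (intro divide_left_mono) (auto simp: Suc_le_eq)
    ultimately have "p / (48 * real (card Ag)) \<le> (1 - \<beta>) * f S"
      using True p_bounds by linarith
    then show ?thesis
      using outcome unfolding p_def by blast
  next
    case False
    have rest: "(\<Union>j\<in>Ag - {i}. S\<^sub>0 \<inter> T j) = S\<^sub>0 - T i"
      using NE_subset[OF ne] disjoint_actions i unfolding all_actions_def by blast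
    obtain j \<beta> S where outcome: "single_agent_outcome j \<beta> S"
      and "w / (12 * real (card Ag)) \<le> (1 - \<beta>) * f S"
      using approx_by_small_share_agents[OF ne ct Diff_subset others_small]
      unfolding rest w_def[symmetric] by blast
    moreover have "p / (48 * real (card Ag)) \<le> w / (12 * real (card Ag))"
      using False p_bounds card_agents_pos by (simp add: field_simps)
    ultimately have "p / (48 * real (card Ag)) \<le> (1 - \<beta>) * f S"
      by linarith
    then show ?thesis
      using outcome unfolding p_def by blast
  qed
qed

lemma single_agent_approx:
  assumes ne: "is_NE Ag T c f a S\<^sub>0" and ct: "is_contract Ag a"
  shows "\<exists>i \<beta> S. single_agent_outcome i \<beta> S \<and>
           principal_util Ag f a S\<^sub>0 / (48 * real (card Ag)) \<le> (1 - \<beta>) * f S"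
proof -
  have F: "0 \<le> f S\<^sub>0"
    using NE_subset[OF ne] by (rule f_nonneg)
  consider (over_budget) "1 \<le> sum a Ag" | (small) "\<forall>j\<in>Ag. a j \<le> 1/2"
    | (dominant) i where "i \<in> Ag" "1/2 < a i" "sum a Ag < 1"
    by (meson not_le)
  then show ?thesis
  proof cases
    case over_budget
    then have "principal_util Ag f a S\<^sub>0 / (48 * real (card Ag)) \<le> 0"
      unfolding principal_util_def using F card_agents_pos
      by (simp add: divide_nonpos_pos mult_nonpos_nonneg)
    moreover obtain i S where outcome: "single_agent_outcome i 0 S"
      using ex_single_agent_outcome[of 0] by auto
    ultimately have "principal_util Ag f a S\<^sub>0 / (48 * real (card Ag)) \<le> (1 - 0) * f S"
      using single_agent_outcome_util_nonneg[OF outcome] by linarith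
    then show ?thesis
      using outcome by blast
  next
    case small
    have all: "(\<Union>j\<in>Ag. S\<^sub>0 \<inter> T j) = S\<^sub>0"
      using NE_subset[OF ne] unfolding all_actions_def by blast
    obtain i \<beta> S where outcome: "single_agent_outcome i \<beta> S"
      and bound: "f S\<^sub>0 / (12 * real (card Ag)) \<le> (1 - \<beta>) * f S"
      using approx_by_small_share_agents[OF ne ct subset_refl small] unfolding all by blast
    have "(1 - sum a Ag) * f S\<^sub>0 \<le> 1 * f S\<^sub>0"
      using ct F by (intro mult_right_mono) (auto simp: is_contract_def intro!: sum_nonneg)
    then have "principal_util Ag f a S\<^sub>0 / (48 * real (card Ag)) \<le> f S\<^sub>0 / (48 * real (card Ag))"
      unfolding principal_util_def using card_agents_pos by (intro divide_right_mono) auto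
    also have "\<dots> \<le> f S\<^sub>0 / (12 * real (card Ag))"
      using F card_agents_pos by (intro divide_left_mono) auto
    also note bound
    finally show ?thesis
      using outcome by blast
  next
    case dominant
    then show ?thesis
      using approx_with_dominant_agent[OF ne ct] by blast
  qed
qed

end

theorem theoremC1:
  "\<exists>C::real. C > 0 \<and>
    (\<forall>(Ag::nat set) (T::nat \<Rightarrow> nat set) (c::nat \<Rightarrow> real) (f::nat set \<Rightarrow> real).
      finite Ag \<and> Ag \<noteq> {} \<and>
      (\<forall>i\<in>Ag. finite (T i)) \<and>
      (\<forall>i\<in>Ag. \<forall>k\<in>Ag. i \<noteq> k \<longrightarrow> T i \<inter> T k = {}) \<and>
      (\<forall>j\<in>all_actions Ag T. 0 \<le> c j) \<and>
      valid_reward (all_actions Ag T) f \<and>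
      subadditive_on (all_actions Ag T) f
      \<longrightarrow>
      (\<exists>\<alpha> S. is_contract Ag \<alpha> \<and> card {i\<in>Ag. \<alpha> i \<noteq> 0} \<le> 1 \<and>
             is_NE Ag T c f \<alpha> S \<and>
             (\<forall>\<alpha>' S'. is_contract Ag \<alpha>' \<and> is_NE Ag T c f \<alpha>' S' \<longrightarrow>
                principal_util Ag f \<alpha> S \<ge> C / real (card Ag) * principal_util Ag f \<alpha>' S')))"
proof (intro exI[of _ "1/48"] conjI allI impI)
  fix Ag :: "nat set" and T :: "nat \<Rightarrow> nat set" and c :: "nat \<Rightarrow> real"
    and f :: "nat set \<Rightarrow> real"
  assume "finite Ag \<and> Ag \<noteq> {} \<and> (\<forall>i\<in>Ag. finite (T i)) \<and>
      (\<forall>i\<in>Ag. \<forall>k\<in>Ag. i \<noteq> k \<longrightarrow> T i \<inter> T k = {}) \<and> (\<forall>j\<in>all_actions Ag T. 0 \<le> c j) \<and>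
      valid_reward (all_actions Ag T) f \<and> subadditive_on (all_actions Ag T) f"
  then interpret subadditive_contract_instance Ag T c f
    by unfold_locales auto
  obtain i\<^sub>0 \<beta>\<^sub>0 S\<^sub>0 where opt: "single_agent_outcome i\<^sub>0 \<beta>\<^sub>0 S\<^sub>0"
    and max: "\<And>i \<beta> S. single_agent_outcome i \<beta> S \<Longrightarrow> (1 - \<beta>) * f S \<le> (1 - \<beta>\<^sub>0) * f S\<^sub>0"
    using ex_optimal_single_agent_outcome by blast
  note single = single_agent_outcome_NE[OF opt]
  show "\<exists>\<alpha> S. is_contract Ag \<alpha> \<and> card {i\<in>Ag. \<alpha> i \<noteq> 0} \<le> 1 \<and> is_NE Ag T c f \<alpha> S \<and>
          (\<forall>\<alpha>' S'. is_contract Ag \<alpha>' \<and> is_NE Ag T c f \<alpha>' S' \<longrightarrow>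
             1/48 / real (card Ag) * principal_util Ag f \<alpha>' S' \<le> principal_util Ag f \<alpha> S)"
  proof (intro exI[of _ "single_agent_contract i\<^sub>0 \<beta>\<^sub>0"] exI[of _ S\<^sub>0] conjI allI impI
      single(1-3))
    fix \<alpha>' S' assume "is_contract Ag \<alpha>' \<and> is_NE Ag T c f \<alpha>' S'"
    then obtain i \<beta> S where outcome: "single_agent_outcome i \<beta> S"
      and approx: "principal_util Ag f \<alpha>' S' / (48 * real (card Ag)) \<le> (1 - \<beta>) * f S"
      using single_agent_approx by blast
    have "1/48 / real (card Ag) * principal_util Ag f \<alpha>' S'
          = principal_util Ag f \<alpha>' S' / (48 * real (card Ag))"
      by simp
    also have "\<dots> \<le> (1 - \<beta>) * f S"
      by (fact approx)
    also have "\<dots> \<le> principal_util Ag f (single_agent_contract i\<^sub>0 \<beta>\<^sub>0) S\<^sub>0"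
      using max[OF outcome] single(4) by simp
    finally show "1/48 / real (card Ag) * principal_util Ag f \<alpha>' S'
                  \<le> principal_util Ag f (single_agent_contract i\<^sub>0 \<beta>\<^sub>0) S\<^sub>0" .
  qed
qed simp

end
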